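(* There are absolute constants $c_1,c_2>0$ such that for infinitely many $n$ there exist integers $b_1,\dots,b_n\ge 0$ with $b_1+\dots+b_n=n-1$ such that $(b_1,\dots,b_n)$-BG has an equilibrium graph in the SUM version whose diameter $d$ satisfies $c_1\log n\le d\le c_2\log n$.
   Context: Bounded budget network creation game $(b_1,\dots,b_n)$-BG: $n$ players with integer budgets $0\le b_i\le n-1$. A strategy of player $i$ is a set $S_i\subseteq\{1,\dots,n\}\setminus\{i\}$ with $|S_i|=b_i$; a profile is realized by the directed graph $G$ on $u_1,\dots,u_n$ with an arc $\overrightarrow{u_iu_j}$ iff $j\in S_i$. $U(G)$ is the undirected multigraph obtained by ignoring directions; $\operatorname{dist}(u,v)$ is the distance in $U(G)$, defined as $n^2$ between different components. SUM cost: $c_{SUM}(u)=\sum_v\operatorname{dist}(u,v)$. An equilibrium graph in the SUM version is a realization in which no vertex can decrease its SUM cost by changing its own strategy while the other strategies are fixed. The diameter is the maximum distance between two vertices. Logarithms are base 2. *)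

theory Defs
  imports Complex_Main
begin

text \<open>Players/vertices are 0,...,n-1. A profile is S :: nat => nat set, S i being
the strategy of player i. Budgets b :: nat => nat (only values below n matter).\<close>

definition is_strategy :: "nat \<Rightarrow> (nat \<Rightarrow> nat) \<Rightarrow> nat \<Rightarrow> nat set \<Rightarrow> bool" where
  "is_strategy n b i T \<longleftrightarrow> T \<subseteq> {..<n} - {i} \<and> card T = b i"

definition is_profile :: "nat \<Rightarrow> (nat \<Rightarrow> nat) \<Rightarrow> (nat \<Rightarrow> nat set) \<Rightarrow> bool" where
  "is_profile n b S \<longleftrightarrow> (\<forall>i<n. is_strategy n b i (S i))"

definition adj :: "(nat \<Rightarrow> nat set) \<Rightarrow> nat \<Rightarrow> nat \<Rightarrow> bool" where
  "adj S u v \<longleftrightarrow> v \<in> S u \<or> u \<in> S v"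

definition walk :: "nat \<Rightarrow> (nat \<Rightarrow> nat set) \<Rightarrow> nat \<Rightarrow> nat \<Rightarrow> nat \<Rightarrow> bool" where
  "walk n S k u v \<longleftrightarrow> (\<exists>p::nat \<Rightarrow> nat. p 0 = u \<and> p k = v \<and> (\<forall>i\<le>k. p i < n)
      \<and> (\<forall>i<k. adj S (p i) (p (Suc i))))"

definition gdist :: "nat \<Rightarrow> (nat \<Rightarrow> nat set) \<Rightarrow> nat \<Rightarrow> nat \<Rightarrow> nat" where
  "gdist n S u v = (if \<exists>k. walk n S k u v then (LEAST k. walk n S k u v) else n ^ 2)"

definition sum_cost :: "nat \<Rightarrow> (nat \<Rightarrow> nat set) \<Rightarrow> nat \<Rightarrow> nat" where
  "sum_cost n S u = (\<Sum>v<n. gdist n S u v)"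

definition sum_equilibrium :: "nat \<Rightarrow> (nat \<Rightarrow> nat) \<Rightarrow> (nat \<Rightarrow> nat set) \<Rightarrow> bool" where
  "sum_equilibrium n b S \<longleftrightarrow> is_profile n b S \<and>
     (\<forall>i<n. \<forall>T. is_strategy n b i T \<longrightarrow> sum_cost n S i \<le> sum_cost n (S(i := T)) i)"

definition diameter :: "nat \<Rightarrow> (nat \<Rightarrow> nat set) \<Rightarrow> nat" where
  "diameter n S = Max {gdist n S u v | u v. u < n \<and> v < n}"

end

theory Submission
  imports Defs "HOL-Library.Infinite_Set"
begin

text \<open>The witnesses are complete binary trees on \<open>n = 2 ^ (h + 1) - 1\<close> vertices in which every
  vertex buys the edges to its children; the budgets sum to \<open>n - 1\<close> and the diameter is \<open>2 h\<close>.
  Leaves cannot deviate. An internal vertex must again buy two edges: if it misses the subtree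
  of one child, that subtree is disconnected from it; otherwise it enters each child subtree
  at a single vertex \<open>t\<close>, which is no better than entering at the child itself, because the root
  of a complete binary tree is a median of its vertices (sibling subtrees have equal size),
  and the edge to the parent is kept, so no other distance decreases.\<close>

definition heap_parent :: "nat \<Rightarrow> nat" where
  "heap_parent c = (c - 1) div 2"

fun depth :: "nat \<Rightarrow> nat" where
  "depth 0 = 0"
| "depth (Suc v) = Suc (depth (v div 2))"

text \<open>In the numbering \<open>v + 1\<close> (root 1, children \<open>2m, 2m + 1\<close>) the ancestors of a vertex
  are obtained by repeated halving.\<close>
definition in_subtree :: "nat \<Rightarrow> nat \<Rightarrow> bool" where
  "in_subtree c v \<longleftrightarrow> (\<exists>j. (v + 1) div 2 ^ j = c + 1)"

lemma heap_parent_less: "0 < v \<Longrightarrow> heap_parent v < v"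
  by (simp add: heap_parent_def)

lemma heap_parent_children [simp]:
  "heap_parent (Suc (2 * a)) = a" "heap_parent (Suc (Suc (2 * a))) = a"
  by (simp_all add: heap_parent_def)

lemma depth_heap_parent: "0 < v \<Longrightarrow> depth v = Suc (depth (heap_parent v))"
  by (cases v) (simp_all add: heap_parent_def)

lemma depth_children: "depth (2 * a + 1) = Suc (depth a)" "depth (2 * a + 2) = Suc (depth a)"
  using depth_heap_parent[of "2 * a + 1"] depth_heap_parent[of "2 * a + 2"] by simp_all

lemma div_pow_Suc_heap_parent:
  "0 < v \<Longrightarrow> (v + 1) div 2 ^ Suc j = (heap_parent v + 1) div 2 ^ j"
  by (simp add: heap_parent_def div_mult2_eq mult.commute)
    (metis One_nat_def Suc_pred add.commute plus_1_eq_Suc div2_Suc_Suc)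

lemma ancestor_step:
  assumes "(v + 1) div 2 ^ Suc j = c + 1"
  shows "0 < v" "(heap_parent v + 1) div 2 ^ j = c + 1"
proof -
  show "0 < v"
  proof (rule ccontr)
    assume "\<not> 0 < v"
    then have "v + 1 < 2 ^ Suc j"
      using one_less_power[of "2::nat" "Suc j"] by simp
    then have "(v + 1) div 2 ^ Suc j = 0"
      by (rule div_less)
    with assms show False by simp
  qed
  then show "(heap_parent v + 1) div 2 ^ j = c + 1"
    using assms div_pow_Suc_heap_parent by simp
qed

lemma depth_ancestor: "(v + 1) div 2 ^ j = c + 1 \<Longrightarrow> depth v = depth c + j"
proof (induction j arbitrary: v)
  case (Suc j)
  with ancestor_step[OF Suc.prems] show ?case
    using depth_heap_parent by simp
qed simp

lemma heap_parent_Suc_eq: "0 < c \<Longrightarrow> heap_parent c + 1 = (c + 1) div 2"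
  using div_pow_Suc_heap_parent[of c 0] by simp

lemma in_subtree_refl: "in_subtree c c"
  unfolding in_subtree_def by (rule exI[of _ 0]) simp

lemma in_subtree_le: "in_subtree c v \<Longrightarrow> c \<le> v"
  unfolding in_subtree_def by (metis add_le_cancel_right div_le_dividend)

lemma in_subtree_depth_le: "in_subtree c v \<Longrightarrow> depth c \<le> depth v"
  unfolding in_subtree_def using depth_ancestor by fastforce

lemma in_subtree_heap_parent:
  assumes "in_subtree c v" "v \<noteq> c"
  shows "0 < v" "in_subtree c (heap_parent v)"
proof -
  obtain j where j: "(v + 1) div 2 ^ j = c + 1"
    using assms(1) unfolding in_subtree_def by blast
  with assms(2) obtain j' where "j = Suc j'"
    by (cases j) auto
  with j show "0 < v" "in_subtree c (heap_parent v)"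
    using ancestor_step unfolding in_subtree_def by blast+
qed

lemma in_subtree_of_heap_parent: "0 < v \<Longrightarrow> in_subtree c (heap_parent v) \<Longrightarrow> in_subtree c v"
  unfolding in_subtree_def by (metis div_pow_Suc_heap_parent)

lemma in_subtree_ancestor: "in_subtree c v \<Longrightarrow> 0 < c \<Longrightarrow> in_subtree (heap_parent c) v"
  unfolding in_subtree_def
  by (metis heap_parent_Suc_eq div_mult2_eq power_Suc2)

lemma in_subtree_children_disjoint: "in_subtree (2 * a + 1) v \<Longrightarrow> \<not> in_subtree (2 * a + 2) v"
proof
  assume "in_subtree (2 * a + 1) v" "in_subtree (2 * a + 2) v"
  then obtain j k where j: "(v + 1) div 2 ^ j = 2 * a + 1 + 1" and k: "(v + 1) div 2 ^ k = 2 * a + 2 + 1"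
    unfolding in_subtree_def by blast
  have "j = k"
    using depth_ancestor[OF j] depth_ancestor[OF k] depth_children by simp
  with j k show False
    by simp
qed

lemma in_subtree_children_cases:
  assumes "in_subtree a v" "v \<noteq> a"
  shows "in_subtree (2 * a + 1) v \<or> in_subtree (2 * a + 2) v"
proof -
  obtain j where j: "(v + 1) div 2 ^ j = a + 1"
    using assms(1) unfolding in_subtree_def by blast
  with assms(2) obtain j' where j': "j = Suc j'"
    by (cases j) auto
  define q where "q = (v + 1) div 2 ^ j'"
  have "q div 2 = a + 1"
    using j unfolding j' q_def by (simp only: power_Suc2 div_mult2_eq)
  then have "q = 2 * a + 1 + 1 \<or> q = 2 * a + 2 + 1"
    by linarith
  then show ?thesis
    unfolding in_subtree_def q_def by blast
qed

inductive walk_avoiding :: "nat \<Rightarrow> (nat \<Rightarrow> nat set) \<Rightarrow> nat set \<Rightarrow> nat \<Rightarrow> nat \<Rightarrow> nat \<Rightarrow> bool"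
  for n S X where
  Nil: "u < n \<Longrightarrow> u \<notin> X \<Longrightarrow> walk_avoiding n S X 0 u u"
| Cons: "u < n \<Longrightarrow> u \<notin> X \<Longrightarrow> adj S u w \<Longrightarrow> walk_avoiding n S X k w v
    \<Longrightarrow> walk_avoiding n S X (Suc k) u v"

lemma walk_avoiding_start: "walk_avoiding n S X k u v \<Longrightarrow> u < n \<and> u \<notin> X"
  by (induction rule: walk_avoiding.induct) auto

lemma walk_avoiding_mono: "walk_avoiding n S X k u v \<Longrightarrow> Y \<subseteq> X \<Longrightarrow> walk_avoiding n S Y k u v"
  by (induction rule: walk_avoiding.induct) (auto intro: walk_avoiding.intros)

lemma walk_imp_walk_avoiding: "walk n S k u v \<Longrightarrow> walk_avoiding n S {} k u v"
proof (induction k arbitrary: u)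
  case 0
  then show ?case by (auto simp: walk_def intro: walk_avoiding.Nil)
next
  case (Suc k)
  then obtain p where p: "p 0 = u" "p (Suc k) = v" "\<forall>i\<le>Suc k. p i < n"
      "\<forall>i<Suc k. adj S (p i) (p (Suc i))"
    unfolding walk_def by blast
  have "walk n S k (p 1) v"
    unfolding walk_def by (rule exI[of _ "\<lambda>i. p (Suc i)"]) (use p in auto)
  from Suc.IH[OF this] p show ?case
    by (auto intro!: walk_avoiding.Cons[where w = "p 1"])
qed

lemma walk_avoiding_imp_walk: "walk_avoiding n S X k u v \<Longrightarrow> walk n S k u v"
proof (induction rule: walk_avoiding.induct)
  case (Nil u)
  then show ?case
    unfolding walk_def by (intro exI[of _ "\<lambda>i. u"]) auto
next
  case (Cons u w k v)
  then obtain p where p: "p 0 = w" "p k = v" "\<forall>i\<le>k. p i < n"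
      "\<forall>i<k. adj S (p i) (p (Suc i))"
    unfolding walk_def by blast
  let ?q = "\<lambda>i. if i = 0 then u else p (i - 1)"
  have "adj S (?q i) (?q (Suc i))" if "i < Suc k" for i
    using p Cons.hyps that by (cases i) auto
  moreover have "?q i < n" if "i \<le> Suc k" for i
    using p Cons.hyps that by auto
  ultimately show ?case
    unfolding walk_def using p by (intro exI[of _ ?q]) auto
qed

lemma adj_sym: "adj S u w \<Longrightarrow> adj S w u"
  by (auto simp: adj_def)

lemma walk_avoiding_snoc:
  "walk_avoiding n S {} k u w \<Longrightarrow> adj S w v \<Longrightarrow> v < n \<Longrightarrow> walk_avoiding n S {} (Suc k) u v"
  by (induction rule: walk_avoiding.induct) (auto intro: walk_avoiding.intros)

lemma walk_avoiding_rev: "walk_avoiding n S {} k u v \<Longrightarrow> walk_avoiding n S {} k v u"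
  by (induction rule: walk_avoiding.induct)
    (auto intro: walk_avoiding.Nil walk_avoiding_snoc adj_sym)

lemma walk_avoiding_append:
  "walk_avoiding n S {} k u w \<Longrightarrow> walk_avoiding n S {} l w v \<Longrightarrow> walk_avoiding n S {} (k + l) u v"
  by (induction rule: walk_avoiding.induct) (auto intro: walk_avoiding.intros)

lemma gdist_le_walk: "walk_avoiding n S X k u v \<Longrightarrow> gdist n S u v \<le> k"
  unfolding gdist_def by (auto dest: walk_avoiding_imp_walk intro: Least_le)

lemma walk_avoiding_gdist:
  assumes "walk_avoiding n S X k u v"
  shows "walk_avoiding n S {} (gdist n S u v) u v"
proof -
  have ex: "\<exists>k. walk n S k u v"
    using assms walk_avoiding_imp_walk by blast
  then have "walk n S (LEAST k. walk n S k u v) u v"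
    by (rule LeastI_ex)
  with ex show ?thesis
    unfolding gdist_def using walk_imp_walk_avoiding by simp
qed

lemma le_gdist:
  assumes "\<And>k. walk_avoiding n S {} k u v \<Longrightarrow> m \<le> k" "m \<le> n\<^sup>2"
  shows "m \<le> gdist n S u v"
proof (cases "\<exists>k. walk n S k u v")
  case True
  then have "walk n S (LEAST k. walk n S k u v) u v"
    by (rule LeastI_ex)
  with True show ?thesis
    unfolding gdist_def using assms(1) walk_imp_walk_avoiding by simp
qed (use assms(2) in \<open>simp add: gdist_def\<close>)

lemma gdist_self: "u < n \<Longrightarrow> gdist n S u u = 0"
  using gdist_le_walk[OF walk_avoiding.Nil[of u n "{}" S]] by simp

lemma walk_avoiding_last_exit:
  "walk_avoiding n S {} k u v \<Longrightarrow> v \<noteq> i \<Longrightarrow>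
   (u \<noteq> i \<and> walk_avoiding n S {i} k u v) \<or>
   (\<exists>x l. l < k \<and> adj S i x \<and> walk_avoiding n S {i} l x v)"
proof (induction rule: walk_avoiding.induct)
  case (Nil u)
  then show ?case by (auto intro: walk_avoiding.Nil)
next
  case (Cons u w k v)
  from Cons.IH[OF Cons.prems] show ?case
  proof
    assume "w \<noteq> i \<and> walk_avoiding n S {i} k w v"
    with Cons.hyps show ?thesis
      by (cases "u = i") (auto intro: walk_avoiding.Cons)
  qed (meson less_Suc_eq)
qed

lemma walk_avoiding_fun_upd:
  "walk_avoiding n (S(i := T)) {i} k u v \<Longrightarrow> walk_avoiding n S {i} k u v"
proof (induction rule: walk_avoiding.induct)
  case (Nil u)
  then show ?case by (auto intro: walk_avoiding.Nil)
next
  case (Cons u w k v)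
  have "w \<noteq> i"
    using walk_avoiding_start[OF Cons.hyps(4)] by simp
  with Cons.hyps(2,3) have "adj S u w"
    by (auto simp: adj_def split: if_splits)
  with Cons show ?case
    by (auto intro: walk_avoiding.Cons)
qed

definition heap_profile :: "nat \<Rightarrow> nat \<Rightarrow> nat set" where
  "heap_profile n v = {c. 0 < c \<and> c < n \<and> heap_parent c = v}"

lemma adj_heap_profile_iff:
  "adj (heap_profile n) u w \<longleftrightarrow>
    (0 < w \<and> w < n \<and> heap_parent w = u) \<or> (0 < u \<and> u < n \<and> heap_parent u = w)"
  by (auto simp: adj_def heap_profile_def)

lemma adj_heap_parent: "0 < v \<Longrightarrow> v < n \<Longrightarrow> adj (heap_profile n) v (heap_parent v)"
  by (simp add: adj_heap_profile_iff)

lemma adj_heap_profile_depth: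
  "adj (heap_profile n) u w \<Longrightarrow> depth w = Suc (depth u) \<or> depth u = Suc (depth w)"
  unfolding adj_heap_profile_iff by (auto simp: depth_heap_parent)

lemma walk_avoiding_depth:
  "walk_avoiding n (heap_profile m) X k u v \<Longrightarrow> depth v \<le> depth u + k \<and> depth u \<le> depth v + k"
proof (induction rule: walk_avoiding.induct)
  case (Cons u w k v)
  then show ?case
    using adj_heap_profile_depth[of m u w] by auto
qed simp

lemma walk_avoiding_heap_parent_in_subtree:
  "walk_avoiding n (heap_profile m) {heap_parent c} k u v \<Longrightarrow> 0 < c \<Longrightarrow>
    in_subtree c u \<longleftrightarrow> in_subtree c v"
proof (induction rule: walk_avoiding.induct)
  case (Cons u w k v)
  have "w \<noteq> heap_parent c"
    using walk_avoiding_start[OF Cons.hyps(4)] by simp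
  have "in_subtree c u \<longleftrightarrow> in_subtree c w"
    using Cons.hyps(3) unfolding adj_heap_profile_iff
  proof
    assume "0 < w \<and> w < m \<and> heap_parent w = u"
    with Cons.hyps(2) show ?thesis
      using in_subtree_heap_parent in_subtree_of_heap_parent by blast
  next
    assume "0 < u \<and> u < m \<and> heap_parent u = w"
    with \<open>w \<noteq> heap_parent c\<close> show ?thesis
      using in_subtree_heap_parent in_subtree_of_heap_parent by blast
  qed
  with Cons show ?case by simp
qed simp

text \<open>A walk leaving the subtree of \<open>c\<close> steps from \<open>c\<close> to \<open>heap_parent c\<close>.\<close>
lemma walk_leaving_subtree:
  "walk_avoiding n (heap_profile m) {} k u v \<Longrightarrow> in_subtree c u \<Longrightarrow> \<not> in_subtree c v \<Longrightarrow> 0 < c \<Longrightarrow>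
    depth u + depth v \<le> k + 2 * depth (heap_parent c)"
proof (induction rule: walk_avoiding.induct)
  case (Cons u w k v)
  show ?case
  proof (cases "in_subtree c w")
    case True
    with Cons adj_heap_profile_depth[OF Cons.hyps(3)] show ?thesis
      by auto
  next
    case False
    from Cons.hyps(3) have "u = c \<and> w = heap_parent c"
      unfolding adj_heap_profile_iff
    proof
      assume "0 < w \<and> w < m \<and> heap_parent w = u"
      with Cons.prems False in_subtree_of_heap_parent show ?thesis by blast
    next
      assume "0 < u \<and> u < m \<and> heap_parent u = w"
      with Cons.prems False in_subtree_heap_parent show ?thesis by blast
    qed
    moreover have "depth v \<le> depth w + k"
      using walk_avoiding_depth[OF Cons.hyps(4)] by simp
    ultimately show ?thesis
      using depth_heap_parent[OF Cons.prems(3)] by simp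
  qed
qed simp

lemma in_subtree_root: "in_subtree 0 v"
proof (induction v rule: less_induct)
  case (less v)
  show ?case
  proof (cases "v = 0")
    case False
    then show ?thesis
      using less heap_parent_less in_subtree_of_heap_parent by blast
  qed (simp add: in_subtree_refl)
qed

lemma walk_to_ancestor:
  assumes "in_subtree c v" "v < n"
  shows "walk_avoiding n (heap_profile n) {} (depth v - depth c) v c"
proof -
  have "walk_avoiding n (heap_profile n) {} j v c" if "(v + 1) div 2 ^ j = c + 1" "v < n" for j
    using that
  proof (induction j arbitrary: v)
    case 0
    then show ?case by (auto intro: walk_avoiding.Nil)
  next
    case (Suc j)
    note step = ancestor_step[OF Suc.prems(1)]
    with Suc.IH[of "heap_parent v"] Suc.prems(2) heap_parent_less
    have "walk_avoiding n (heap_profile n) {} j (heap_parent v) c"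
      by (meson order.strict_trans)
    with step Suc.prems(2) adj_heap_parent show ?case
      by (blast intro: walk_avoiding.Cons)
  qed
  with assms show ?thesis
    unfolding in_subtree_def using depth_ancestor by fastforce
qed

lemma walk_heap_via_root:
  assumes "u < n" "v < n"
  shows "walk_avoiding n (heap_profile n) {} (depth u + depth v) u v"
proof -
  have "walk_avoiding n (heap_profile n) {} (depth u) u 0"
    using walk_to_ancestor[OF in_subtree_root assms(1)] by simp
  moreover have "walk_avoiding n (heap_profile n) {} (depth v) 0 v"
    using walk_avoiding_rev[OF walk_to_ancestor[OF in_subtree_root assms(2)]] by simp
  ultimately show ?thesis
    by (rule walk_avoiding_append)
qed

lemma gdist_heap_le_depth:
  "u < n \<Longrightarrow> v < n \<Longrightarrow> gdist n (heap_profile n) u v \<le> depth u + depth v"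
  using gdist_le_walk[OF walk_heap_via_root] .

lemma walk_heap_gdist:
  "u < n \<Longrightarrow> v < n \<Longrightarrow> walk_avoiding n (heap_profile n) {} (gdist n (heap_profile n) u v) u v"
  using walk_avoiding_gdist[OF walk_heap_via_root] .

lemma depth_le_gdist_heap:
  "u < n \<Longrightarrow> v < n \<Longrightarrow> depth v \<le> depth u + gdist n (heap_profile n) u v"
  using walk_avoiding_depth[OF walk_heap_gdist] by blast

lemma gdist_heap_leaving_subtree:
  "u < n \<Longrightarrow> v < n \<Longrightarrow> in_subtree c u \<Longrightarrow> \<not> in_subtree c v \<Longrightarrow> 0 < c \<Longrightarrow>
    depth u + depth v \<le> gdist n (heap_profile n) u v + 2 * depth (heap_parent c)"
  using walk_leaving_subtree[OF walk_heap_gdist] by blast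

lemma depth_less: "v + 1 < 2 ^ H \<Longrightarrow> depth v < H"
proof (induction v arbitrary: H rule: less_induct)
  case (less v)
  show ?case
  proof (cases "v = 0")
    case True
    with less.prems show ?thesis by (cases H) auto
  next
    case False
    then obtain H' where H: "H = Suc H'"
      using less.prems by (cases H) auto
    have "heap_parent v + 1 < 2 ^ H'"
      using heap_parent_Suc_eq[of v] False less.prems H by auto
    from less.IH[OF heap_parent_less this] False show ?thesis
      by (simp add: depth_heap_parent H)
  qed
qed

lemma depth_pow2_minus_1: "depth (2 ^ h - 1) = h"
proof (induction h)
  case (Suc h)
  have "0 < (2::nat) ^ h"
    by simp
  then have "(2::nat) ^ Suc h - 1 = Suc (2 * (2 ^ h - 1))"
    by (simp only: power_Suc)
  with Suc show ?case by simp
qed simp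

definition subtree :: "nat \<Rightarrow> nat \<Rightarrow> nat set" where
  "subtree n c = {v. v < n \<and> in_subtree c v}"

lemma finite_subtree [simp]: "finite (subtree n c)"
  by (simp add: subtree_def)

lemma right_sibling_shift_bound:
  assumes X: "X < (2::nat) ^ H" and d: "X div 2 ^ j = 2 * a + 2"
  shows "X + 2 ^ j < 2 ^ H"
proof -
  define P where "P = (2::nat) ^ j"
  have p: "0 < P" by (simp add: P_def)
  have lo: "P * (2 * a + 2) \<le> X"
    using div_times_less_eq_dividend[of X P] d by (simp add: P_def mult.commute)
  have hi: "X + P < P * (2 * a + 4)"
    using dividend_less_div_times[OF p, of X] d by (simp add: P_def algebra_simps)
  have "2 ^ (j + 1) < (2::nat) ^ H"
    using lo X mult_left_mono[of 2 "2 * a + 2" P] by (simp add: P_def)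
  then have "j + 1 < H"
    by (rule power_less_imp_less_exp[rotated]) simp
  then obtain m where H: "H = j + 1 + m"
    by (metis less_imp_add_positive add.commute)
  have e: "(2::nat) ^ H = P * (2 * 2 ^ m)"
    by (simp add: H power_add P_def)
  have "2 * a + 2 < 2 * 2 ^ m"
    using lo X e mult_less_cancel1[of P] by (metis le_less_trans)
  then have "P * (2 * a + 4) \<le> P * (2 * 2 ^ m)"
    by (intro mult_left_mono) presburger+
  with hi e show ?thesis
    unfolding P_def[symmetric] by linarith
qed

text \<open>Shifting by \<open>2 ^ j\<close> maps level \<open>j\<close> of the left subtree of \<open>a\<close> onto level \<open>j\<close> of the right one.\<close>
lemma card_left_subtree_le_right:
  assumes n: "n = 2 ^ H - 1"
  shows "card (subtree n (2 * a + 1)) \<le> card (subtree n (2 * a + 2))"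
proof -
  define f where "f v = v + 2 ^ (depth v - depth (2 * a + 1))" for v
  have key: "f v \<in> subtree n (2 * a + 2) \<and> depth (f v) = depth v"
    if v: "v \<in> subtree n (2 * a + 1)" for v
  proof -
    from v obtain j where j: "(v + 1) div 2 ^ j = 2 * a + 2"
      unfolding subtree_def in_subtree_def by auto
    have dv: "depth v = depth (2 * a + 1) + j"
      using depth_ancestor[of v j "2 * a + 1"] j by simp
    then have fv: "f v = v + 2 ^ j"
      by (simp add: f_def)
    have "v < n"
      using v by (simp add: subtree_def)
    with n have "v + 1 < 2 ^ H"
      by linarith
    then have "v + 1 + 2 ^ j < 2 ^ H"
      using right_sibling_shift_bound j by blast
    then have "f v < n"
      using fv n by simp
    moreover have "(v + 1 + 2 ^ j) div 2 ^ j = (v + 1) div 2 ^ j + 1"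
      by (intro div_add_self2) simp
    then have e: "(f v + 1) div 2 ^ j = 2 * a + 2 + 1"
      using j fv by (simp add: algebra_simps)
    moreover have "depth (f v) = depth v"
      using depth_ancestor[OF e] dv depth_children by simp
    ultimately show ?thesis
      unfolding subtree_def in_subtree_def by blast
  qed
  have "inj_on f (subtree n (2 * a + 1))"
  proof (rule inj_onI)
    fix x y
    assume x: "x \<in> subtree n (2 * a + 1)" and y: "y \<in> subtree n (2 * a + 1)" and "f x = f y"
    moreover from this have "depth x = depth y"
      using key by metis
    ultimately show "x = y"
      unfolding f_def by simp
  qed
  moreover have "f ` subtree n (2 * a + 1) \<subseteq> subtree n (2 * a + 2)"
    using key by auto
  ultimately show ?thesis
    by (intro card_inj_on_le) auto
qed

lemma card_right_subtree_le_left: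
  "card (subtree n (2 * a + 2)) \<le> card (subtree n (2 * a + 1))"
proof -
  define f where "f v = v - 2 ^ (depth v - depth (2 * a + 2))" for v
  have key: "f v \<in> subtree n (2 * a + 1) \<and> depth (f v) = depth v \<and> 2 ^ (depth v - depth (2 * a + 2)) \<le> v"
    if v: "v \<in> subtree n (2 * a + 2)" for v
  proof -
    from v obtain j where j: "(v + 1) div 2 ^ j = 2 * a + 2 + 1"
      unfolding subtree_def in_subtree_def by blast
    have dv: "depth v = depth (2 * a + 2) + j"
      using depth_ancestor[of v j "2 * a + 2"] j by simp
    have "(2 * a + 2 + 1) * 2 ^ j \<le> v + 1"
      using div_times_less_eq_dividend[of "v + 1" "2 ^ j"] unfolding j .
    moreover have "0 < (2::nat) ^ j"
      by simp
    ultimately have ge: "2 ^ j \<le> v"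
      by (simp add: algebra_simps)
    then have fv: "f v + 1 + 2 ^ j = v + 1"
      using dv by (simp add: f_def)
    have "f v < n"
      using fv v by (simp add: subtree_def)
    moreover have e: "(f v + 1) div 2 ^ j = 2 * a + 1 + 1"
      using j fv div_add_self2[of "2 ^ j" "f v + 1"] by simp
    moreover have "depth (f v) = depth v"
      using depth_ancestor[OF e] dv depth_children by simp
    ultimately show ?thesis
      using ge dv unfolding subtree_def in_subtree_def by auto
  qed
  have "inj_on f (subtree n (2 * a + 2))"
  proof (rule inj_onI)
    fix x y
    assume x: "x \<in> subtree n (2 * a + 2)" and y: "y \<in> subtree n (2 * a + 2)" and "f x = f y"
    moreover have "depth x = depth y"
      using key[OF x] key[OF y] \<open>f x = f y\<close> by simp
    ultimately show "x = y"
      using key[OF x] key[OF y] unfolding f_def by simp linarith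
  qed
  moreover have "f ` subtree n (2 * a + 2) \<subseteq> subtree n (2 * a + 1)"
    using key by auto
  ultimately show ?thesis
    by (intro card_inj_on_le) auto
qed

lemma card_sibling_subtrees_eq:
  "n = 2 ^ H - 1 \<Longrightarrow> card (subtree n (2 * a + 1)) = card (subtree n (2 * a + 2))"
  using card_left_subtree_le_right card_right_subtree_le_left le_antisym by blast

text \<open>Moving from \<open>a\<close> to a vertex \<open>t\<close> below the child \<open>e\<close> saves at most \<open>k = depth t - depth a\<close>
  on each vertex below \<open>e\<close> and costs at least \<open>k\<close> on each of the, at least as many, other ones.\<close>
lemma sum_depth_subtree_le_sum_gdist:
  assumes n: "n = 2 ^ H - 1" and a: "a < n" and t: "t \<in> subtree n a"
  shows "(\<Sum>v\<in>subtree n a. depth v - depth a) \<le> (\<Sum>v\<in>subtree n a. gdist n (heap_profile n) t v)"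
proof (cases "t = a")
  case True
  show ?thesis
  proof (rule sum_mono)
    fix v
    assume "v \<in> subtree n a"
    then show "depth v - depth a \<le> gdist n (heap_profile n) t v"
      using depth_le_gdist_heap[OF a, of v] True by (simp add: subtree_def)
  qed
next
  case False
  define D where "D = subtree n a"
  define g where "g v = gdist n (heap_profile n) t v" for v
  define k where "k = depth t - depth a"
  have tn: "t < n" and ta: "in_subtree a t"
    using t by (simp_all add: subtree_def)
  obtain e e' where ee: "(e = 2 * a + 1 \<and> e' = 2 * a + 2) \<or> (e = 2 * a + 2 \<and> e' = 2 * a + 1)"
    and te: "in_subtree e t"
    using in_subtree_children_cases[OF ta False] by blast
  define E where "E = subtree n e"
  have pe: "heap_parent e = a" "heap_parent e' = a" "0 < e" "0 < e'" "depth e = Suc (depth a)"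
    using ee depth_children by (auto simp: heap_parent_def)
  have disj: "in_subtree e v \<Longrightarrow> \<not> in_subtree e' v" for v
    using ee in_subtree_children_disjoint by blast
  have ED: "E \<subseteq> D"
    using in_subtree_ancestor[of e] pe unfolding E_def D_def subtree_def by auto
  have "subtree n e' \<subseteq> D - E"
    using in_subtree_ancestor[of e'] pe disj unfolding E_def D_def subtree_def by auto
  then have "card (subtree n e') \<le> card (D - E)"
    by (intro card_mono) (simp_all add: D_def)
  moreover have "card E = card (subtree n e')"
    using ee card_sibling_subtrees_eq[OF n, of a] unfolding E_def by auto
  ultimately have card_le: "card E \<le> card (D - E)"
    by simp
  have dt: "depth e \<le> depth t"
    using in_subtree_depth_le[OF te] .
  have closer: "(\<Sum>v\<in>E. depth v - depth a) \<le> (\<Sum>v\<in>E. g v) + k * card E"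
  proof -
    have "(\<Sum>v\<in>E. depth v - depth a) \<le> (\<Sum>v\<in>E. g v + k)"
    proof (rule sum_mono)
      fix v
      assume "v \<in> E"
      then have "depth v \<le> depth t + g v"
        using depth_le_gdist_heap tn unfolding E_def g_def subtree_def by blast
      then show "depth v - depth a \<le> g v + k"
        unfolding k_def using dt pe by linarith
    qed
    then show ?thesis
      by (simp add: sum.distrib mult.commute)
  qed
  have farther: "(\<Sum>v\<in>D - E. depth v - depth a) + k * card (D - E) \<le> (\<Sum>v\<in>D - E. g v)"
  proof -
    have "(\<Sum>v\<in>D - E. depth v - depth a + k) \<le> (\<Sum>v\<in>D - E. g v)"
    proof (rule sum_mono)
      fix v
      assume "v \<in> D - E"
      then have v: "v < n" "in_subtree a v" "\<not> in_subtree e v"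
        unfolding D_def E_def subtree_def by auto
      have "depth t + depth v \<le> g v + 2 * depth a"
        using gdist_heap_leaving_subtree[OF tn v(1) te v(3) pe(3)] pe(1) unfolding g_def by simp
      moreover have "depth a \<le> depth v"
        using in_subtree_depth_le[OF v(2)] .
      ultimately show "depth v - depth a + k \<le> g v"
        unfolding k_def using dt pe by linarith
    qed
    then show ?thesis
      by (simp add: sum.distrib mult.commute)
  qed
  have "k * card E \<le> k * card (D - E)"
    using card_le by simp
  moreover have "(\<Sum>v\<in>D. depth v - depth a) = (\<Sum>v\<in>D - E. depth v - depth a) + (\<Sum>v\<in>E. depth v - depth a)"
    "(\<Sum>v\<in>D. g v) = (\<Sum>v\<in>D - E. g v) + (\<Sum>v\<in>E. g v)"
    using sum.subset_diff[OF ED] by (simp_all add: D_def)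
  ultimately show ?thesis
    using closer farther unfolding D_def g_def by linarith
qed

lemma depth_complete_heap_le:
  assumes "n = 2 ^ Suc h - 1" "v < n"
  shows "depth v \<le> h"
proof -
  have "v + 1 < 2 ^ Suc h"
    using assms by linarith
  then show ?thesis
    using depth_less by fastforce
qed

lemma height_complete_heap_le: "n = 2 ^ Suc h - 1 \<Longrightarrow> 2 * h + 1 \<le> n"
  using less_exp[of h] by (simp only: power_Suc)

lemma gdist_complete_heap_le:
  assumes "n = 2 ^ Suc h - 1" "u < n" "v < n"
  shows "gdist n (heap_profile n) u v \<le> 2 * h"
  using gdist_heap_le_depth[OF assms(2,3)]
    depth_complete_heap_le[OF assms(1,2)] depth_complete_heap_le[OF assms(1,3)] by linarith

lemma gdist_complete_heap_less_sq:
  assumes "n = 2 ^ Suc h - 1" "u < n" "v < n"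
  shows "gdist n (heap_profile n) u v < n\<^sup>2"
proof -
  have "n \<le> n\<^sup>2"
    by (simp add: power2_eq_square)
  then show ?thesis
    using gdist_complete_heap_le[OF assms] height_complete_heap_le[OF assms(1)] by linarith
qed

lemma sum_cost_complete_heap_le_sq:
  assumes n: "n = 2 ^ Suc h - 1" and i: "i < n"
  shows "sum_cost n (heap_profile n) i \<le> n\<^sup>2"
proof -
  have "sum_cost n (heap_profile n) i \<le> (\<Sum>v<n. 2 * h)"
    unfolding sum_cost_def by (rule sum_mono) (simp add: gdist_complete_heap_le[OF n i])
  also have "\<dots> \<le> n * n"
    using height_complete_heap_le[OF n] by simp
  finally show ?thesis
    by (simp add: power2_eq_square)
qed

lemma heap_profile_subset: "heap_profile n i \<subseteq> {..<n} - {i}"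
proof
  fix x
  assume "x \<in> heap_profile n i"
  then have "0 < x" "x < n" "heap_parent x = i"
    by (auto simp: heap_profile_def)
  then show "x \<in> {..<n} - {i}"
    using heap_parent_less[of x] by auto
qed

lemma heap_profile_leaf: "n \<le> 2 * i + 1 \<Longrightarrow> heap_profile n i = {}"
  by (auto simp: heap_profile_def heap_parent_def)

lemma heap_profile_internal:
  assumes "n = 2 ^ H - 1" "2 * i + 1 < n"
  shows "heap_profile n i = {2 * i + 1, 2 * i + 2}" "2 * i + 2 < n"
proof -
  have "even (n + 1)"
    using assms by (cases H) auto
  with assms(2) show "2 * i + 2 < n"
    by presburger
  then show "heap_profile n i = {2 * i + 1, 2 * i + 2}"
    by (auto simp: heap_profile_def heap_parent_def)
qed

lemma sum_card_heap_profile: "(\<Sum>i<n. card (heap_profile n i)) = n - 1"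
proof -
  have "(\<Sum>i<n. card (heap_profile n i)) = card (\<Union>i<n. heap_profile n i)"
    by (rule card_UN_disjoint[symmetric]) (auto simp: heap_profile_def)
  also have "(\<Union>i<n. heap_profile n i) = {0<..<n}"
  proof
    show "{0<..<n} \<subseteq> (\<Union>i<n. heap_profile n i)"
    proof
      fix x
      assume x: "x \<in> {0<..<n}"
      then have "x \<in> heap_profile n (heap_parent x)" "heap_parent x < n"
        using heap_parent_less[of x] by (auto simp: heap_profile_def)
      then show "x \<in> (\<Union>i<n. heap_profile n i)"
        by blast
    qed
  qed (auto simp: heap_profile_def)
  finally show ?thesis
    by simp
qed

lemma adj_deviation:
  assumes "i \<notin> T" "adj ((heap_profile n)(i := T)) i x"
  shows "x \<in> T \<or> (0 < i \<and> heap_parent i = x)"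
  using assms by (cases "x = i") (auto simp: adj_def heap_profile_def)

lemma walk_into_child_subtree_after_deviation:
  assumes T: "i \<notin> T" and c: "0 < c" "heap_parent c = i" and v: "in_subtree c v"
    and w: "walk_avoiding n ((heap_profile n)(i := T)) {} k i v"
  obtains x l where "x \<in> T" "in_subtree c x" "l < k" "walk_avoiding n (heap_profile n) {} l x v"
proof -
  have "i < c"
    using c heap_parent_less by blast
  then have "v \<noteq> i"
    using in_subtree_le[OF v] by simp
  with walk_avoiding_last_exit[OF w] obtain x l where
    xl: "l < k" "adj ((heap_profile n)(i := T)) i x" "walk_avoiding n ((heap_profile n)(i := T)) {i} l x v"
    by blast
  have w': "walk_avoiding n (heap_profile n) {i} l x v"
    using walk_avoiding_fun_upd[OF xl(3)] .
  then have "in_subtree c x"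
    using walk_avoiding_heap_parent_in_subtree[of n n c l x v] c v by simp
  moreover have "heap_parent i < c"
    using \<open>i < c\<close> by (simp add: heap_parent_def)
  then have "\<not> in_subtree c (heap_parent i)"
    using in_subtree_le by fastforce
  ultimately have "x \<in> T"
    using adj_deviation[OF T xl(2)] by blast
  with \<open>in_subtree c x\<close> xl(1) walk_avoiding_mono[OF w'] show ?thesis
    using that by blast
qed

lemma deviation_disconnecting_child_subtree:
  assumes n: "n = 2 ^ Suc h - 1" and i: "i < n" and T: "i \<notin> T"
    and c: "0 < c" "c < n" "heap_parent c = i" and miss: "\<forall>x\<in>T. \<not> in_subtree c x"
  shows "sum_cost n (heap_profile n) i \<le> sum_cost n ((heap_profile n)(i := T)) i"
proof -
  have "\<not> walk_avoiding n ((heap_profile n)(i := T)) {} k i c" for k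
    using walk_into_child_subtree_after_deviation[OF T c(1,3) in_subtree_refl] miss by metis
  then have "\<nexists>k. walk n ((heap_profile n)(i := T)) k i c"
    using walk_imp_walk_avoiding by blast
  then have disconnected: "gdist n ((heap_profile n)(i := T)) i c = n\<^sup>2"
    by (simp add: gdist_def)
  have "sum_cost n (heap_profile n) i \<le> n\<^sup>2"
    using sum_cost_complete_heap_le_sq[OF n i] .
  also have "\<dots> \<le> sum_cost n ((heap_profile n)(i := T)) i"
    unfolding sum_cost_def disconnected[symmetric] by (rule member_le_sum) (use c in auto)
  finally show ?thesis .
qed

text \<open>Inside the subtree of a child \<open>c\<close> the old distances are \<open>1 + (depth v - depth c)\<close>; a deviation
  entering the subtree at \<open>t\<close> pays \<open>1 + gdist t v\<close>, which is no better because \<open>c\<close> is a median.\<close>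
lemma sum_gdist_child_subtree_le:
  assumes n: "n = 2 ^ H - 1" and c: "0 < c" "c < n" "heap_parent c = i" and t: "t \<in> subtree n c"
    and entry: "\<And>v. v \<in> subtree n c \<Longrightarrow> Suc (gdist n (heap_profile n) t v) \<le> gdist n S' i v"
  shows "(\<Sum>v\<in>subtree n c. gdist n (heap_profile n) i v) \<le> (\<Sum>v\<in>subtree n c. gdist n S' i v)"
proof -
  define D where "D = subtree n c"
  have i: "i < n"
    using c heap_parent_less by (metis order.strict_trans)
  have "gdist n (heap_profile n) i v \<le> Suc (depth v - depth c)" if v: "v \<in> D" for v
  proof -
    have "walk_avoiding n (heap_profile n) {} (depth v - depth c) v c"
      using walk_to_ancestor v unfolding D_def subtree_def by blast
    then have "walk_avoiding n (heap_profile n) {} (Suc (depth v - depth c)) v i"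
      using walk_avoiding_snoc adj_heap_parent[OF c(1,2)] c(3) i by blast
    then show ?thesis
      using gdist_le_walk[OF walk_avoiding_rev] by blast
  qed
  then have "(\<Sum>v\<in>D. gdist n (heap_profile n) i v) \<le> (\<Sum>v\<in>D. Suc (depth v - depth c))"
    by (rule sum_mono)
  also have "\<dots> = card D + (\<Sum>v\<in>D. depth v - depth c)"
    unfolding Suc_eq_plus1 sum.distrib by simp
  also have "\<dots> \<le> card D + (\<Sum>v\<in>D. gdist n (heap_profile n) t v)"
    using sum_depth_subtree_le_sum_gdist[OF n c(2) t] unfolding D_def by simp
  also have "\<dots> = (\<Sum>v\<in>D. Suc (gdist n (heap_profile n) t v))"
    unfolding Suc_eq_plus1 sum.distrib by simp
  also have "\<dots> \<le> (\<Sum>v\<in>D. gdist n S' i v)"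
    using entry unfolding D_def by (rule sum_mono)
  finally show ?thesis
    unfolding D_def .
qed

lemma gdist_child_subtree_after_deviation:
  assumes n: "n = 2 ^ Suc h - 1" and T: "i \<notin> T" and c: "0 < c" "heap_parent c = i"
    and t: "t \<in> subtree n c" and unique: "\<forall>x\<in>T. in_subtree c x \<longrightarrow> x = t" and v: "v \<in> subtree n c"
  shows "Suc (gdist n (heap_profile n) t v) \<le> gdist n ((heap_profile n)(i := T)) i v"
proof (rule le_gdist)
  have "t < n" "v < n" "in_subtree c v"
    using t v by (simp_all add: subtree_def)
  then show "Suc (gdist n (heap_profile n) t v) \<le> n\<^sup>2"
    using gdist_complete_heap_less_sq[OF n] by (simp add: Suc_le_eq)
  fix k
  assume "walk_avoiding n ((heap_profile n)(i := T)) {} k i v"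
  from walk_into_child_subtree_after_deviation[OF T c \<open>in_subtree c v\<close> this]
  obtain x l where "x \<in> T" "in_subtree c x" "l < k" "walk_avoiding n (heap_profile n) {} l x v" .
  with unique show "Suc (gdist n (heap_profile n) t v) \<le> k"
    using gdist_le_walk by fastforce
qed

text \<open>A deviation into the two child subtrees keeps the edge to the parent, so vertices outside
  these subtrees get no closer.\<close>
lemma gdist_outside_child_subtrees_after_deviation:
  assumes n: "n = 2 ^ Suc h - 1" and i: "i < n" and T: "i \<notin> T"
    and T_sub: "T \<subseteq> subtree n (2 * i + 1) \<union> subtree n (2 * i + 2)"
    and v: "v < n" "\<not> in_subtree (2 * i + 1) v" "\<not> in_subtree (2 * i + 2) v"
  shows "gdist n (heap_profile n) i v \<le> gdist n ((heap_profile n)(i := T)) i v"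
proof (cases "v = i")
  case False
  show ?thesis
  proof (rule le_gdist)
    show "gdist n (heap_profile n) i v \<le> n\<^sup>2"
      using gdist_complete_heap_less_sq[OF n i v(1)] by simp
    fix k
    assume "walk_avoiding n ((heap_profile n)(i := T)) {} k i v"
    from walk_avoiding_last_exit[OF this False] obtain x l where
      xl: "l < k" "adj ((heap_profile n)(i := T)) i x" "walk_avoiding n ((heap_profile n)(i := T)) {i} l x v"
      by blast
    have w: "walk_avoiding n (heap_profile n) {i} l x v"
      using walk_avoiding_fun_upd[OF xl(3)] .
    have "x \<notin> T"
    proof
      assume "x \<in> T"
      then obtain c where "c = 2 * i + 1 \<or> c = 2 * i + 2" "in_subtree c x"
        using T_sub by (auto simp: subtree_def)
      moreover from this have "in_subtree c x \<longleftrightarrow> in_subtree c v"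
        using walk_avoiding_heap_parent_in_subtree[of n n c l x v] w by auto
      ultimately show False
        using v by blast
    qed
    then have "0 < i" "heap_parent i = x"
      using adj_deviation[OF T xl(2)] by auto
    then have "walk_avoiding n (heap_profile n) {} (Suc l) i v"
      using adj_heap_parent[OF _ i] walk_avoiding_mono[OF w] i by (blast intro: walk_avoiding.Cons)
    then show "gdist n (heap_profile n) i v \<le> k"
      using gdist_le_walk xl(1) by fastforce
  qed
qed (simp add: gdist_self[OF i])

lemma deviation_into_both_child_subtrees:
  assumes n: "n = 2 ^ Suc h - 1" and i: "i < n" and T: "T = {t1, t2}"
    and t1: "t1 \<in> subtree n (2 * i + 1)" and t2: "t2 \<in> subtree n (2 * i + 2)"
  shows "sum_cost n (heap_profile n) i \<le> sum_cost n ((heap_profile n)(i := T)) i"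
proof -
  define S' where "S' = (heap_profile n)(i := T)"
  define D1 where "D1 = subtree n (2 * i + 1)"
  define D2 where "D2 = subtree n (2 * i + 2)"
  define R where "R = {..<n} - D1 - D2"
  have disj: "in_subtree (2 * i + 1) v \<Longrightarrow> \<not> in_subtree (2 * i + 2) v" for v
    using in_subtree_children_disjoint by blast
  have "i < t1" "i < t2"
    using t1 t2 in_subtree_le[of _ t1] in_subtree_le[of _ t2] by (fastforce simp: subtree_def)+
  then have iT: "i \<notin> T"
    using T by auto
  have T_sub: "T \<subseteq> D1 \<union> D2"
    using T t1 t2 by (simp add: D1_def D2_def)
  have unique1: "\<forall>x\<in>T. in_subtree (2 * i + 1) x \<longrightarrow> x = t1"
    and unique2: "\<forall>x\<in>T. in_subtree (2 * i + 2) x \<longrightarrow> x = t2"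
    using T t1 t2 disj by (auto simp: subtree_def)
  have "(\<Sum>v\<in>R. gdist n (heap_profile n) i v) \<le> (\<Sum>v\<in>R. gdist n S' i v)"
    unfolding S'_def
    by (rule sum_mono, rule gdist_outside_child_subtrees_after_deviation[OF n i iT T_sub[unfolded D1_def D2_def]])
      (auto simp: R_def D1_def D2_def subtree_def)
  moreover have "(\<Sum>v\<in>D1. gdist n (heap_profile n) i v) \<le> (\<Sum>v\<in>D1. gdist n S' i v)"
    unfolding D1_def S'_def
    by (rule sum_gdist_child_subtree_le[OF n _ _ _ t1 gdist_child_subtree_after_deviation[OF n iT _ _ t1 unique1]])
      (use t1 in_subtree_le[of "2 * i + 1" t1] in \<open>auto simp: subtree_def\<close>)
  moreover have "(\<Sum>v\<in>D2. gdist n (heap_profile n) i v) \<le> (\<Sum>v\<in>D2. gdist n S' i v)"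
    unfolding D2_def S'_def
    by (rule sum_gdist_child_subtree_le[OF n _ _ _ t2 gdist_child_subtree_after_deviation[OF n iT _ _ t2 unique2]])
      (use t2 in_subtree_le[of "2 * i + 2" t2] in \<open>auto simp: subtree_def\<close>)
  moreover have "sum f {..<n} = sum f R + sum f D1 + sum f D2" for f :: "nat \<Rightarrow> nat"
  proof -
    have "D1 \<subseteq> {..<n}" "D2 \<subseteq> {..<n} - D1"
      using disj by (auto simp: D1_def D2_def subtree_def)
    then show ?thesis
      unfolding R_def using sum.subset_diff[of D1 "{..<n}" f] sum.subset_diff[of D2 "{..<n} - D1" f]
      by simp
  qed
  ultimately show ?thesis
    unfolding sum_cost_def S'_def by (metis add_mono)
qed

lemma heap_profile_best_response:
  assumes n: "n = 2 ^ Suc h - 1" and i: "i < n"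
    and T: "is_strategy n (\<lambda>v. card (heap_profile n v)) i T"
  shows "sum_cost n (heap_profile n) i \<le> sum_cost n ((heap_profile n)(i := T)) i"
proof -
  have T_sub: "T \<subseteq> {..<n} - {i}" and card_T: "card T = card (heap_profile n i)"
    using T by (simp_all add: is_strategy_def)
  then have fin: "finite T" and iT: "i \<notin> T"
    using finite_subset by auto
  show ?thesis
  proof (cases "2 * i + 1 < n")
    case False
    then have "heap_profile n i = {}" "T = {}"
      using heap_profile_leaf card_T fin by auto
    then show ?thesis
      by (simp add: fun_upd_idem)
  next
    case True
    note internal = heap_profile_internal[OF n True]
    show ?thesis
    proof (cases "\<exists>c\<in>{2 * i + 1, 2 * i + 2}. \<forall>x\<in>T. \<not> in_subtree c x")
      case True
      then obtain c where c: "c = 2 * i + 1 \<or> c = 2 * i + 2" and miss: "\<forall>x\<in>T. \<not> in_subtree c x"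
        by auto
      have "0 < c" "c < n" "heap_parent c = i"
        using c internal(2) by auto
      then show ?thesis
        using deviation_disconnecting_child_subtree[OF n i iT _ _ _ miss] by blast
    next
      case False
      then obtain t1 t2 where "t1 \<in> T" "in_subtree (2 * i + 1) t1" "t2 \<in> T" "in_subtree (2 * i + 2) t2"
        by auto
      moreover from this have "t1 \<noteq> t2"
        using in_subtree_children_disjoint by blast
      moreover have "card T = 2"
        using card_T internal(1) by simp
      ultimately have "T = {t1, t2}" "t1 \<in> subtree n (2 * i + 1)" "t2 \<in> subtree n (2 * i + 2)"
        using card_subset_eq[OF fin, of "{t1, t2}"] T_sub by (auto simp: subtree_def)
      then show ?thesis
        using deviation_into_both_child_subtrees[OF n i] by blast
    qed
  qed
qed

lemma heap_profile_sum_equilibrium: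
  assumes "n = 2 ^ Suc h - 1"
  shows "sum_equilibrium n (\<lambda>v. card (heap_profile n v)) (heap_profile n)"
  unfolding sum_equilibrium_def is_profile_def is_strategy_def
  using heap_profile_subset heap_profile_best_response[OF assms] by (simp add: is_strategy_def)

lemma diameter_complete_heap:
  assumes n: "n = 2 ^ Suc h - 1"
  shows "h \<le> diameter n (heap_profile n)" "diameter n (heap_profile n) \<le> 2 * h"
proof -
  define G where "G = {gdist n (heap_profile n) u v | u v. u < n \<and> v < n}"
  have G_sub: "G \<subseteq> {..2 * h}"
    unfolding G_def using gdist_complete_heap_le[OF n] by auto
  then have fin: "finite G"
    using finite_subset by blast
  have "0 < (2::nat) ^ h"
    by simp
  then have deepest: "2 ^ h - 1 < n"
    using n by (simp only: power_Suc)
  moreover have "0 < n"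
    using deepest by linarith
  ultimately have "gdist n (heap_profile n) 0 (2 ^ h - 1) \<in> G"
    unfolding G_def by blast
  moreover have "h \<le> gdist n (heap_profile n) 0 (2 ^ h - 1)"
    using depth_le_gdist_heap[OF _ deepest, of 0] deepest depth_pow2_minus_1 by simp
  ultimately show "h \<le> diameter n (heap_profile n)"
    unfolding diameter_def G_def[symmetric] using Max_ge[OF fin] le_trans by blast
  show "diameter n (heap_profile n) \<le> 2 * h"
    unfolding diameter_def G_def[symmetric]
    using G_sub fin \<open>gdist n (heap_profile n) 0 (2 ^ h - 1) \<in> G\<close> by (auto intro: Max.boundedI)
qed

lemma complete_heap_logarithmic_equilibrium:
  assumes h: "0 < h" and n: "n = 2 ^ Suc h - 1"
  shows "\<exists>b :: nat \<Rightarrow> nat. (\<forall>i<n. b i \<le> n - 1) \<and> (\<Sum>i<n. b i) = n - 1 \<and>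
    (\<exists>S. sum_equilibrium n b S \<and>
      1 / 2 * log 2 (real n) \<le> real (diameter n S) \<and> real (diameter n S) \<le> 2 * log 2 (real n))"
proof (intro exI conjI allI impI)
  show "card (heap_profile n i) \<le> n - 1" if "i < n" for i
    using card_mono[OF _ heap_profile_subset[of n i]] that by simp
  show "(\<Sum>i<n. card (heap_profile n i)) = n - 1"
    by (rule sum_card_heap_profile)
  show "sum_equilibrium n (\<lambda>i. card (heap_profile n i)) (heap_profile n)"
    using heap_profile_sum_equilibrium[OF n] .
  have "0 < (2::nat) ^ h"
    by simp
  then have "2 ^ h \<le> n" "0 < n"
    using n by (simp_all only: power_Suc)
  then have "log 2 (real n) \<le> real h + 1" "real h \<le> log 2 (real n)"
    using log2_of_power_le[of n "Suc h"] le_log2_of_power[of h n] n by simp_all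
  then show "1 / 2 * log 2 (real n) \<le> real (diameter n (heap_profile n))"
    "real (diameter n (heap_profile n)) \<le> 2 * log 2 (real n)"
    using diameter_complete_heap[OF n] h by linarith+
qed

lemma infinite_complete_heap_sizes:
  assumes "\<And>h. 0 < h \<Longrightarrow> P (2 ^ Suc h - 1)"
  shows "infinite {n::nat. P n}"
  unfolding infinite_nat_iff_unbounded_le
proof
  fix m
  have "m \<le> 2 ^ Suc (Suc m) - 1"
    using less_exp[of m] by (simp only: power_Suc)
  then show "\<exists>n\<ge>m. n \<in> {n. P n}"
    using assms[of "Suc m"] by blast
qed

theorem mainTheorem5:
  shows "\<exists>c1 c2 :: real. c1 > 0 \<and> c2 > 0 \<and>
    infinite {n::nat. \<exists>b :: nat \<Rightarrow> nat. (\<forall>i<n. b i \<le> n - 1) \<and> (\<Sum>i<n. b i) = n - 1 \<and>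
       (\<exists>S. sum_equilibrium n b S \<and>
          c1 * log 2 (real n) \<le> real (diameter n S) \<and>
          real (diameter n S) \<le> c2 * log 2 (real n))}"
  by (intro exI[of _ "1 / 2"] exI[of _ 2] conjI infinite_complete_heap_sizes
      complete_heap_logarithmic_equilibrium[OF _ refl]) simp_all

end
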